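(* Let $x_1, x_2, \dots$ be a sequence of real observations and let $f_0(\cdot\mid\theta_0)$ and $f_1(\cdot\mid\theta_1)$ be probability densities that are strictly positive at every $x_k$. Put $\ell_k = \log \frac{f_1(x_k\mid\theta_1)}{f_0(x_k\mid\theta_0)}$. Define the CUSUM statistic recursively by $W_0 = 0$ and $W_n = \max(0, W_{n-1}) + \ell_n$ for $n \ge 1$. For $n\ge 0$, define the log generalized likelihood ratio statistic for a temporary change by $$G_n^{\ast} = \max_{0 \le \nu \le N \le n} \ \sum_{k=\nu+1}^{N} \ell_k ,$$ where an empty sum is $0$. Then $G_n^{\ast} = G_n$ for every $n \ge 0$, where $G_0 = 0$ and $G_n = \max(G_{n-1}, W_n)$ for $n \ge 1$.
   Context: The statistic $G_n^{\ast}$ is the logarithm of the generalized likelihood ratio for testing $\mathcal{H}_0$: $x_1,\dots,x_n$ are i.i.d. with density $f_0(\cdot\mid\theta_0)$, against $\mathcal{H}_1$: there exist unknown times $\nu \le N$ such that $x_k$ has density $f_1(\cdot\mid\theta_1)$ for $\nu < k \le N$ and density $f_0(\cdot\mid\theta_0)$ otherwise, all observations independent. The likelihood ratio of $\mathcal{H}_1$ with parameters $(\nu,N)$ to $\mathcal{H}_0$ is $\prod_{k=\nu+1}^{N} f_1(x_k\mid\theta_1)/f_0(x_k\mid\theta_0)$, and $G_n^{\ast}$ is the logarithm of its maximum over $(\nu,N)$. *)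

theory Defs
  imports "HOL-Analysis.Analysis"
begin

text \<open>Log-likelihood ratio of observation k (observations indexed from 1).
  The parameters theta0, theta1 are fixed and absorbed into the densities f0, f1.\<close>
definition llr :: "(real \<Rightarrow> real) \<Rightarrow> (real \<Rightarrow> real) \<Rightarrow> (nat \<Rightarrow> real) \<Rightarrow> nat \<Rightarrow> real" where
  "llr f0 f1 x k = ln (f1 (x k) / f0 (x k))"

fun cusum :: "(nat \<Rightarrow> real) \<Rightarrow> nat \<Rightarrow> real" where
  "cusum l 0 = 0"
| "cusum l (Suc n) = max 0 (cusum l n) + l (Suc n)"

fun Grec :: "(nat \<Rightarrow> real) \<Rightarrow> nat \<Rightarrow> real" where
  "Grec l 0 = 0"
| "Grec l (Suc n) = max (Grec l n) (cusum l (Suc n))"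

definition Gstar :: "(nat \<Rightarrow> real) \<Rightarrow> nat \<Rightarrow> real" where
  "Gstar l n = Max {(\<Sum>k\<in>{nu<..N}. l k) | nu N. nu \<le> N \<and> N \<le> n}"

end

theory Submission
  imports Defs
begin

text \<open>Page's identity: \<open>max 0 W N\<close> is the largest sum of \<open>l\<close> over a segment
  \<open>{nu<..N}\<close>, empty segment included.  It follows by induction on \<open>N\<close>: appending \<open>l (N+1)\<close>
  shifts every old segment sum by the same amount and adds the empty segment.  Maximising
  over the right end \<open>N \<le> n\<close> as well gives \<open>G* n\<close>, while unrolling the recursion gives
  \<open>G n = max {W N | N \<le> n}\<close>; the positive parts can be dropped because \<open>W 0 = 0\<close>.
  The identity holds for every real sequence \<open>l\<close>.\<close>

lemma Max_UN_image:
  fixes A :: "'i \<Rightarrow> 'a::linorder set"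
  assumes "finite I" "I \<noteq> {}" "\<And>i. i \<in> I \<Longrightarrow> finite (A i) \<and> A i \<noteq> {}"
  shows "Max (\<Union>i\<in>I. A i) = (MAX i\<in>I. Max (A i))"
proof (rule Max_eqI)
  show "finite (\<Union>i\<in>I. A i)" using assms by blast
next
  fix y assume "y \<in> (\<Union>i\<in>I. A i)"
  then obtain i where "i \<in> I" "y \<in> A i" by blast
  then have "y \<le> Max (A i)" using assms(3) by simp
  also have "\<dots> \<le> (MAX i\<in>I. Max (A i))" using \<open>i \<in> I\<close> assms(1) by simp
  finally show "y \<le> (MAX i\<in>I. Max (A i))" .
next
  have "(MAX i\<in>I. Max (A i)) \<in> (\<lambda>i. Max (A i)) ` I" using assms(1,2) by simp
  then obtain i where "i \<in> I" "(MAX i\<in>I. Max (A i)) = Max (A i)" by blast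
  then show "(MAX i\<in>I. Max (A i)) \<in> (\<Union>i\<in>I. A i)" using assms(3) by (metis Max_in UN_I)
qed

lemma Max_image_max_absorb:
  fixes f :: "'i \<Rightarrow> 'a::linorder"
  assumes "finite A" "a \<in> A" "c \<le> f a"
  shows "(MAX x\<in>A. max c (f x)) = (MAX x\<in>A. f x)"
proof -
  have "mono (max c)" by (auto intro: monoI max.mono)
  then have "max c (MAX x\<in>A. f x) = Max (max c ` f ` A)"
    by (rule mono_Max_commute) (use assms in auto)
  moreover have "c \<le> (MAX x\<in>A. f x)" using assms by (meson Max_ge finite_imageI image_eqI order_trans)
  ultimately show ?thesis by (simp add: image_image)
qed

lemma sum_greaterThanAtMost_Suc:
  "nu \<le> N \<Longrightarrow> sum l {nu<..Suc N} = sum l {nu<..N} + (l (Suc N) :: 'a::comm_monoid_add)"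
  by (simp add: atLeastSucAtMost_greaterThanAtMost[symmetric] add.commute)

lemma max_0_cusum_eq_Max_segment_sums:
  "max 0 (cusum l N) = (MAX nu\<in>{..N}. sum l {nu<..N})"
proof (induction N)
  case 0
  then show ?case by simp
next
  case (Suc N)
  have "(MAX nu\<in>{..N}. sum l {nu<..Suc N}) = (MAX nu\<in>{..N}. sum l {nu<..N} + l (Suc N))"
    by (intro arg_cong[where f = Max] image_cong) (auto simp: sum_greaterThanAtMost_Suc)
  also have "\<dots> = cusum l (Suc N)"
    using Suc.IH by (simp add: Max_add_commute)
  finally show ?case by (simp add: atMost_Suc)
qed

lemma Grec_eq_Max_cusum: "Grec l n = (MAX N\<in>{..n}. cusum l N)"
  by (induction n) (simp_all add: atMost_Suc max.commute)

lemma Gstar_eq_Max_segment_sums: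
  "Gstar l n = (MAX N\<in>{..n}. MAX nu\<in>{..N}. sum l {nu<..N})"
proof -
  have "{(\<Sum>k\<in>{nu<..N}. l k) | nu N. nu \<le> N \<and> N \<le> n} = (\<Union>N\<in>{..n}. (\<lambda>nu. sum l {nu<..N}) ` {..N})"
    by auto
  then show ?thesis unfolding Gstar_def by (simp add: Max_UN_image)
qed

theorem proposition1:
  fixes x :: "nat \<Rightarrow> real" and f0 f1 :: "real \<Rightarrow> real"
  assumes "\<And>y. f0 y \<ge> 0" and "\<And>y. f1 y \<ge> 0"
    and "f0 integrable_on UNIV" and "integral UNIV f0 = 1"
    and "f1 integrable_on UNIV" and "integral UNIV f1 = 1"
    and "\<And>k. k \<ge> 1 \<Longrightarrow> f0 (x k) > 0"
    and "\<And>k. k \<ge> 1 \<Longrightarrow> f1 (x k) > 0"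
  shows "\<forall>n. Gstar (llr f0 f1 x) n = Grec (llr f0 f1 x) n"
proof
  fix n
  let ?l = "llr f0 f1 x"
  have "Gstar ?l n = (MAX N\<in>{..n}. max 0 (cusum ?l N))"
    by (simp add: Gstar_eq_Max_segment_sums max_0_cusum_eq_Max_segment_sums)
  also have "\<dots> = (MAX N\<in>{..n}. cusum ?l N)"
    by (rule Max_image_max_absorb[where a = 0]) simp_all
  also have "\<dots> = Grec ?l n"
    by (simp add: Grec_eq_Max_cusum)
  finally show "Gstar ?l n = Grec ?l n" .
qed

end
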